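(* Assume (with $T>0$) that there is $K_0>0$ with $\mathbb{E}[|\mathcal{H}(\mathcal{T}_{t,c})|]\le K_0$ for all $c\in\mathcal{C}$, $t\in[0,T]$, and set $y_c(t):=\mathbb{E}[\mathcal{H}(\mathcal{T}_{t,c})]$. Then the family $(y_c)_{c\in\mathcal{C}}$ satisfies $$y_c(t)=c(y)(0)+\sum_{Z\in\mathcal{M}(c)}\int_0^t\prod_{z\in Z}y_z(s)\,ds,\qquad t\in[0,T],\ c\in\mathcal{C}.$$ In particular $y_{{\rm Id}_i}(t)=y_i(0)+\int_0^t y_{f_i^*}(s)\,ds$ and, for $c=g^*$, $y_{g^*}(t)=g(y(0))+\sum_{j=1}^d\int_0^t y_{f_j^*}(s)\,y_{(\partial_jg)^*}(s)\,ds$.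
   Context: Let $d\ge1$ and let $f=(f_1,\ldots,f_d):\mathbb{R}^d\to\mathbb{R}^d$ with each $f_i$ smooth ($C^\infty$) and Lipschitz; $y(0)\in\mathbb{R}^d$ is a fixed initial condition. Write $\partial_j=\partial/\partial y_j$. For $g:\mathbb{R}^d\to\mathbb{R}$, $g^*$ sends a path $y:\mathbb{R}_+\to\mathbb{R}^d$ to $t\mapsto g(y(t))$; ${\rm Id}_i$ sends $y\mapsto y_i$. Codes: $\mathcal{C}=\{{\rm Id}_i:1\le i\le d\}\cup\{(\partial_1^{i_1}\cdots\partial_d^{i_d}f_i)^*: i_1,\ldots,i_d\ge0,\ 1\le i\le d\}$ (formal symbols). Mechanism: $\mathcal{M}({\rm Id}_i)=\{(f_i^* )\}$ and $\mathcal{M}(g^* )=\{(f_1^*,(\partial_1g)^* ),\ldots,(f_d^*,(\partial_dg)^* )\}$. The value $c(y)(0)$ only depends on $y(0)$: it is $y_i(0)$ if $c={\rm Id}_i$ and $g(y(0))$ if $c=g^*$. Random coding tree: fix a probability density $\rho:\mathbb{R}_+\to(0,\infty)$ with tail $\bar F(t)=\int_t^\infty\rho(u)\,du$. For $t\ge0$ and $c\in\mathcal{C}$, $\mathcal{T}_{t,c}$ is the branching particle system started at time $0$ by one particle with code $c$: each particle $k$, with code $c_k$ born at time $T_{k-}$, has an independent lifetime $\tau_k$ of density $\rho$. If $T_{k-}+\tau_k>t$ the particle is a leaf (set $\mathcal{K}^\partial$). Otherwise it dies at $T_k=T_{k-}+\tau_k\le t$ (set $\mathcal{K}^\circ$),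 an independent tuple $I_k$ is drawn uniformly in $\mathcal{M}(c_k)$, with probability $q_{c_k}(I_k)=1/|\mathcal{M}(c_k)|$, and the particle is replaced by $|I_k|$ offspring born at $T_k$ carrying the codes listed in $I_k$, evolving independently by the same rule. The functional is $$\mathcal{H}(\mathcal{T}_{t,c})=\prod_{k\in\mathcal{K}^\circ}\frac{1}{q_{c_k}(I_k)\,\rho(T_k-T_{k-})}\prod_{k\in\mathcal{K}^\partial}\frac{c_k(y)(0)}{\bar F(t-T_{k-})}.$$ *)

theory Defs
  imports "HOL-Analysis.Analysis" "HOL-Probability.Probability"
begin

definition partial :: "'n::finite \<Rightarrow> (real^'n \<Rightarrow> real) \<Rightarrow> real^'n \<Rightarrow> real" where
  "partial j g x = deriv (\<lambda>s. g (x + s *\<^sub>R axis j 1)) 0"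

fun Dlist :: "'n::finite list \<Rightarrow> (real^'n \<Rightarrow> real) \<Rightarrow> real^'n \<Rightarrow> real" where
  "Dlist [] g = g"
| "Dlist (j # js) g = partial j (Dlist js g)"

text \<open>Mixed partial derivative with multi-index alpha (well defined for smooth g).\<close>
definition Dmulti :: "('n::finite \<Rightarrow> nat) \<Rightarrow> (real^'n \<Rightarrow> real) \<Rightarrow> real^'n \<Rightarrow> real" where
  "Dmulti \<alpha> g = Dlist (SOME js. \<forall>j. count_list js j = \<alpha> j) g"

definition smooth_fun :: "(real^'n::finite \<Rightarrow> real) \<Rightarrow> bool" where
  "smooth_fun g \<longleftrightarrow> (\<forall>js. continuous_on UNIV (Dlist js g) \<and> (\<forall>x. Dlist js g differentiable (at x)))"

text \<open>IdC i is Id_i; DC alpha i is the formal symbol (d^alpha f_i)^*.\<close>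
datatype 'n code = IdC 'n | DC "'n \<Rightarrow> nat" 'n

text \<open>The tuple of M(c) indexed by j: for Id_i the unique tuple (f_i^*);
  for g^* = (d^alpha f_i)^* the tuple (f_j^*, (d_j g)^*).\<close>
fun offspring :: "'n code \<Rightarrow> 'n \<Rightarrow> 'n code list" where
  "offspring (IdC i) j = [DC (\<lambda>_. 0) i]"
| "offspring (DC \<alpha> i) j = [DC (\<lambda>_. 0) j, DC (\<alpha>(j := Suc (\<alpha> j))) i]"

definition mech :: "'n::finite code \<Rightarrow> 'n code list set" where
  "mech c = range (offspring c)"

text \<open>c(y)(0) as a function of f and y(0).\<close>
fun code_val :: "(real^'n::finite \<Rightarrow> real^'n) \<Rightarrow> real^'n \<Rightarrow> 'n code \<Rightarrow> real" where
  "code_val f y0 (IdC i) = y0 $ i"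
| "code_val f y0 (DC \<alpha> i) = Dmulti \<alpha> (\<lambda>x. f x $ i) y0"

definition tailF :: "(real \<Rightarrow> real) \<Rightarrow> real \<Rightarrow> real" where
  "tailF \<rho> s = (LINT u:{s..}|lborel. \<rho> u)"

text \<open>Particles are labelled by Ulam-Harris words (nat list); the root is [].
  X lab = (lifetime of particle lab, uniform index j selecting the tuple
  offspring c j of M(c)).  Hf n ... is H computed with recursion depth n
  (returns 0 if the depth is exhausted).\<close>
fun Hf :: "nat \<Rightarrow> ('n::finite code \<Rightarrow> real) \<Rightarrow> (real \<Rightarrow> real) \<Rightarrow> (nat list \<Rightarrow> 'w \<Rightarrow> real \<times> 'n)
            \<Rightarrow> real \<Rightarrow> 'n code \<Rightarrow> nat list \<Rightarrow> real \<Rightarrow> 'w \<Rightarrow> real" where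
  "Hf 0 v \<rho> X t c lab b \<omega> = 0"
| "Hf (Suc n) v \<rho> X t c lab b \<omega> =
     (let \<tau> = fst (X lab \<omega>); Z = offspring c (snd (X lab \<omega>)) in
      if t < b + \<tau> then v c / tailF \<rho> (t - b)
      else real (card (mech c)) / \<rho> \<tau> *
           (\<Prod>k<length Z. Hf n v \<rho> X t (Z ! k) (lab @ [k]) (b + \<tau>) \<omega>))"

text \<open>H(T_{t,c}): the depth-truncated values are eventually constant whenever the
  tree is finite (which holds almost surely); the value 0 is an arbitrary
  convention on the remaining event.\<close>
definition Hval :: "('n::finite code \<Rightarrow> real) \<Rightarrow> (real \<Rightarrow> real) \<Rightarrow> (nat list \<Rightarrow> 'w \<Rightarrow> real \<times> 'n)
            \<Rightarrow> real \<Rightarrow> 'n code \<Rightarrow> 'w \<Rightarrow> real" where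
  "Hval v \<rho> X t c \<omega> =
     (if convergent (\<lambda>n. Hf n v \<rho> X t c [] 0 \<omega>) then lim (\<lambda>n. Hf n v \<rho> X t c [] 0 \<omega>) else 0)"

end

theory Submission
  imports Defs
begin

text \<open>
  Condition on the mark \<open>(\<tau>, j)\<close> of the root particle. If \<open>\<tau> > t\<close> the root is a leaf with
  weight \<open>c(y)(0) / F(t)\<close>, which averages to \<open>c(y)(0)\<close>. Otherwise the root branches at time
  \<open>\<tau>\<close> into the codes of the \<open>j\<close>-th tuple \<open>Z\<close> of \<open>M(c)\<close>; their subtrees are independent copies
  of the coding tree with horizon \<open>t - \<tau>\<close>, so the conditional expectation factorises into
  \<open>\<Prod>z\<in>Z. y_z(t - \<tau>)\<close>. The weight \<open>|M(c)| / \<rho>(\<tau>)\<close> cancels the density of \<open>\<tau>\<close> and the uniform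
  choice of \<open>j\<close>, leaving \<open>\<Sum>Z\<in>M(c). \<integral>\<^sub>0\<^sup>t \<Prod>z\<in>Z. y_z(t - s) ds\<close>; reflect \<open>s \<mapsto> t - s\<close>.
  Only the initial values \<open>c(y)(0)\<close> enter.
\<close>

section \<open>The functional on a fixed field of marks\<close>

definition subtree :: "(nat list \<Rightarrow> 'a) \<Rightarrow> nat \<Rightarrow> nat list \<Rightarrow> 'a" where
  "subtree \<xi> k = (\<lambda>l. \<xi> (k # l))"

definition graft :: "'a \<times> (nat \<Rightarrow> nat list \<Rightarrow> 'a) \<Rightarrow> nat list \<Rightarrow> 'a" where
  "graft x = (\<lambda>l. case l of [] \<Rightarrow> fst x | k # l' \<Rightarrow> snd x k l')"

lemma graft_Nil [simp]: "graft (a, \<eta>) [] = a"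
  and subtree_graft [simp]: "subtree (graft (a, \<eta>)) k = \<eta> k"
  by (simp_all add: graft_def subtree_def)

text \<open>\<open>\<xi> l\<close> is the mark (lifetime, tuple index) of particle \<open>l\<close>, and the clock is restarted at the
  birth of the root; \<open>Hf\<close> is the same recursion read off the random marks \<open>X\<close>.\<close>
fun H_depth :: "('n::finite code \<Rightarrow> real) \<Rightarrow> (real \<Rightarrow> real) \<Rightarrow> nat \<Rightarrow> real \<Rightarrow> 'n code
                 \<Rightarrow> (nat list \<Rightarrow> real \<times> 'n) \<Rightarrow> real" where
  "H_depth v \<rho> 0 t c \<xi> = 0"
| "H_depth v \<rho> (Suc n) t c \<xi> =
     (if t < fst (\<xi> []) then v c / tailF \<rho> t
      else real (card (mech c)) / \<rho> (fst (\<xi> [])) *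
        (\<Prod>k<length (offspring c (snd (\<xi> []))).
           H_depth v \<rho> n (t - fst (\<xi> [])) (offspring c (snd (\<xi> [])) ! k) (subtree \<xi> k)))"

lemma Hf_eq_H_depth: "Hf n v \<rho> X t c lab b \<omega> = H_depth v \<rho> n (t - b) c (\<lambda>l. X (lab @ l) \<omega>)"
proof (induction n arbitrary: t c lab b)
  case (Suc n)
  then show ?case by (simp add: Let_def algebra_simps subtree_def cong: prod.cong)
qed simp

text \<open>A nonzero truncation never hits the depth bound, so deeper truncations agree with it.\<close>
lemma H_depth_eq_if_nonzero:
  assumes "H_depth v \<rho> n t c \<xi> \<noteq> 0" and "n \<le> m"
  shows "H_depth v \<rho> m t c \<xi> = H_depth v \<rho> n t c \<xi>"
  using assms
proof (induction n arbitrary: m t c \<xi>)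
  case 0 then show ?case by simp
next
  case (Suc n)
  then obtain m' where m: "m = Suc m'" "n \<le> m'" by (cases m) auto
  show ?case
  proof (cases "t < fst (\<xi> [])")
    case True then show ?thesis using m by simp
  next
    case False
    let ?Z = "offspring c (snd (\<xi> []))" and ?s = "t - fst (\<xi> [])"
    have "H_depth v \<rho> n ?s (?Z ! k) (subtree \<xi> k) \<noteq> 0" if "k < length ?Z" for k
      using Suc.prems(1) False that by auto
    then have eq: "H_depth v \<rho> m' ?s (?Z ! k) (subtree \<xi> k) = H_depth v \<rho> n ?s (?Z ! k) (subtree \<xi> k)"
      if "k \<in> {..<length ?Z}" for k
      using Suc.IH m(2) that by blast
    show ?thesis using False m(1) by (simp only: H_depth.simps if_False prod.cong[OF refl eq])
  qed
qed

lemma convergent_H_depth: "convergent (\<lambda>n. H_depth v \<rho> n t c \<xi>)"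
proof (cases "\<exists>N. H_depth v \<rho> N t c \<xi> \<noteq> 0")
  case True
  then obtain N where "H_depth v \<rho> N t c \<xi> \<noteq> 0" by blast
  then have "eventually (\<lambda>n. H_depth v \<rho> n t c \<xi> = H_depth v \<rho> N t c \<xi>) sequentially"
    unfolding eventually_sequentially using H_depth_eq_if_nonzero by blast
  then show ?thesis by (auto simp: convergent_def intro: tendsto_eventually)
qed (auto simp: convergent_def)

definition H_tree :: "('n::finite code \<Rightarrow> real) \<Rightarrow> (real \<Rightarrow> real) \<Rightarrow> real \<Rightarrow> 'n code
                       \<Rightarrow> (nat list \<Rightarrow> real \<times> 'n) \<Rightarrow> real" where
  "H_tree v \<rho> t c \<xi> = lim (\<lambda>n. H_depth v \<rho> n t c \<xi>)"

lemma H_depth_tendsto_H_tree: "(\<lambda>n. H_depth v \<rho> n t c \<xi>) \<longlonglongrightarrow> H_tree v \<rho> t c \<xi>"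
  using convergent_H_depth unfolding H_tree_def by (simp add: convergent_LIMSEQ_iff)

lemma Hval_eq_H_tree: "Hval v \<rho> X t c \<omega> = H_tree v \<rho> t c (\<lambda>l. X l \<omega>)"
  unfolding Hval_def H_tree_def Hf_eq_H_depth by (simp add: convergent_H_depth)

lemma H_tree_unfold:
  "H_tree v \<rho> t c \<xi> =
     (if t < fst (\<xi> []) then v c / tailF \<rho> t
      else real (card (mech c)) / \<rho> (fst (\<xi> [])) *
        (\<Prod>k<length (offspring c (snd (\<xi> []))).
           H_tree v \<rho> (t - fst (\<xi> [])) (offspring c (snd (\<xi> [])) ! k) (subtree \<xi> k)))"
  (is "_ = ?rhs")
proof (rule LIMSEQ_unique)
  show "(\<lambda>n. H_depth v \<rho> (Suc n) t c \<xi>) \<longlonglongrightarrow> H_tree v \<rho> t c \<xi>"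
    by (rule LIMSEQ_Suc[OF H_depth_tendsto_H_tree])
  show "(\<lambda>n. H_depth v \<rho> (Suc n) t c \<xi>) \<longlonglongrightarrow> ?rhs"
  proof (cases "t < fst (\<xi> [])")
    case False
    show ?thesis
      by (simp only: False H_depth.simps if_False)
         (intro tendsto_mult tendsto_const tendsto_prod H_depth_tendsto_H_tree)
  qed simp
qed

section \<open>Measurability\<close>

abbreviation marks :: "(real \<times> 'n::finite) measure" where
  "marks \<equiv> borel \<Otimes>\<^sub>M count_space UNIV"

lemma measurable_subtree:
  "(\<lambda>\<xi>. subtree \<xi> k) \<in> measurable (PiM UNIV (\<lambda>_::nat list. N)) (PiM UNIV (\<lambda>_::nat list. N))"
  unfolding subtree_def by (rule measurable_PiM_single') (auto simp: space_PiM)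

lemma borel_measurable_tailF:
  assumes [measurable]: "\<rho> \<in> borel_measurable borel"
  shows "tailF \<rho> \<in> borel_measurable borel"
proof -
  have "(\<lambda>(s, u). indicator {s..} u *\<^sub>R \<rho> u) = (\<lambda>x::real \<times> real. (if fst x \<le> snd x then 1 else 0) * \<rho> (snd x))"
    by (auto simp: fun_eq_iff indicator_def)
  then have "(\<lambda>(s, u). indicator {s..} u *\<^sub>R \<rho> u) \<in> borel_measurable (borel \<Otimes>\<^sub>M lborel)"
    by simp
  then have "(\<lambda>s. \<integral>u. indicator {s..} u *\<^sub>R \<rho> u \<partial>lborel) \<in> borel_measurable borel"
    by (rule lborel.borel_measurable_lebesgue_integral)
  moreover have "tailF \<rho> = (\<lambda>s. \<integral>u. indicator {s..} u *\<^sub>R \<rho> u \<partial>lborel)"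
    by (simp add: tailF_def set_lebesgue_integral_def fun_eq_iff)
  ultimately show ?thesis by simp
qed

lemma H_depth_measurable:
  fixes v :: "'n::finite code \<Rightarrow> real"
  assumes [measurable]: "\<rho> \<in> borel_measurable borel"
  shows "(\<lambda>(t, \<xi>). H_depth v \<rho> n t c \<xi>) \<in> borel_measurable (borel \<Otimes>\<^sub>M PiM UNIV (\<lambda>_::nat list. marks))"
proof (induction n arbitrary: c)
  case 0 then show ?case by simp
next
  case (Suc n)
  let ?S = "borel \<Otimes>\<^sub>M PiM UNIV (\<lambda>_::nat list. (marks :: (real \<times> 'n) measure))"
  have [measurable]: "tailF \<rho> \<in> borel_measurable borel"
    by (rule borel_measurable_tailF) measurable
  have [measurable]: "(\<lambda>x::real \<times> (nat list \<Rightarrow> real \<times> 'n). snd x []) \<in> measurable ?S marks"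
    by measurable
  have [measurable]: "(\<lambda>x. H_depth v \<rho> n (fst x - fst (snd x [])) z (subtree (snd x) k)) \<in> borel_measurable ?S"
    for z k
  proof -
    have "(\<lambda>x. (fst x - fst (snd x []), subtree (snd x) k)) \<in> measurable ?S ?S"
      by (intro measurable_Pair measurable_compose[OF measurable_snd measurable_subtree]) measurable
    from measurable_compose[OF this Suc.IH[of z]] show ?thesis by simp
  qed
  have "(\<lambda>x. if fst x < fst (snd x []) then v c / tailF \<rho> (fst x)
      else real (card (mech c)) / \<rho> (fst (snd x [])) *
        (\<Prod>k<length (offspring c j). H_depth v \<rho> n (fst x - fst (snd x [])) (offspring c j ! k) (subtree (snd x) k)))
    \<in> borel_measurable ?S" for j
    by measurable
  moreover have "(\<lambda>x. snd (snd x [])) \<in> measurable ?S (count_space UNIV)"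
    by measurable
  ultimately have "(\<lambda>x. (\<lambda>j x. if fst x < fst (snd x []) then v c / tailF \<rho> (fst x)
      else real (card (mech c)) / \<rho> (fst (snd x [])) *
        (\<Prod>k<length (offspring c j). H_depth v \<rho> n (fst x - fst (snd x [])) (offspring c j ! k) (subtree (snd x) k)))
      (snd (snd x [])) x) \<in> borel_measurable ?S"
    by (rule measurable_compose_countable') auto
  then show ?case by (simp add: case_prod_beta')
qed

lemma H_tree_measurable:
  fixes v :: "'n::finite code \<Rightarrow> real"
  assumes "\<rho> \<in> borel_measurable borel"
  shows "(\<lambda>(t, \<xi>). H_tree v \<rho> t c \<xi>) \<in> borel_measurable (borel \<Otimes>\<^sub>M PiM UNIV (\<lambda>_::nat list. marks))"
  by (rule borel_measurable_LIMSEQ_real[where u="\<lambda>n (t, \<xi>). H_depth v \<rho> n t c \<xi>"])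
     (auto simp: case_prod_beta' intro: H_depth_tendsto_H_tree H_depth_measurable[OF assms, unfolded case_prod_beta'])

section \<open>Families of i.i.d.\ marks indexed by words\<close>

lemma space_PiM_UNIV_const: "space N = UNIV \<Longrightarrow> space (PiM UNIV (\<lambda>_. N)) = UNIV"
  by (auto simp: space_PiM PiE_iff extensional_def)

lemma prod_emb_UNIV_const:
  "space N = UNIV \<Longrightarrow> prod_emb UNIV (\<lambda>_. N) J (PiE J F) = {x. \<forall>j\<in>J. x j \<in> F j}"
  by (auto simp: prod_emb_def PiE_iff extensional_def)

lemma measurable_graft:
  assumes sp: "space N = UNIV"
  shows "graft \<in> measurable (N \<Otimes>\<^sub>M PiM UNIV (\<lambda>_::nat. PiM UNIV (\<lambda>_::nat list. N)))
                             (PiM UNIV (\<lambda>_::nat list. N))"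
  unfolding graft_def
proof (rule measurable_PiM_single')
  let ?Q = "PiM UNIV (\<lambda>_::nat. PiM UNIV (\<lambda>_::nat list. N))"
  fix l :: "nat list"
  show "(\<lambda>x. case l of [] \<Rightarrow> fst x | k # l' \<Rightarrow> snd x k l') \<in> measurable (N \<Otimes>\<^sub>M ?Q) N"
  proof (cases l)
    case (Cons k l')
    have "(\<lambda>x. snd x k) \<in> measurable (N \<Otimes>\<^sub>M ?Q) (PiM UNIV (\<lambda>_::nat list. N))"
      by (rule measurable_compose[OF measurable_snd measurable_component_singleton]) simp
    then have "(\<lambda>x. snd x k l') \<in> measurable (N \<Otimes>\<^sub>M ?Q) N"
      by (rule measurable_compose[OF _ measurable_component_singleton]) simp
    then show ?thesis using Cons by simp
  qed simp
qed (auto simp: sp space_PiM_UNIV_const)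

lemma graft_vimage_cylinder:
  "graft -` {\<xi>. \<forall>j\<in>J. \<xi> j \<in> F j} =
     (if [] \<in> J then F [] else UNIV) \<times> {\<eta>. \<forall>k\<in>hd ` (J - {[]}). \<eta> k \<in> {\<zeta>. \<forall>l\<in>{l. k # l \<in> J}. \<zeta> l \<in> F (k # l)}}"
  (is "_ = ?A0 \<times> ?G")
proof (rule set_eqI)
  fix x :: "'a \<times> (nat \<Rightarrow> nat list \<Rightarrow> 'a)"
  obtain a \<eta> where x: "x = (a, \<eta>)" by fastforce
  have graft_Cons: "graft (a, \<eta>) (k # l) = \<eta> k l" for k l by (simp add: graft_def)
  have "(\<forall>j\<in>J. graft (a, \<eta>) j \<in> F j) \<longleftrightarrow> a \<in> ?A0 \<and> \<eta> \<in> ?G"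
  proof
    assume "\<forall>j\<in>J. graft (a, \<eta>) j \<in> F j"
    then show "a \<in> ?A0 \<and> \<eta> \<in> ?G" by (auto simp: graft_Cons)
  next
    assume h: "a \<in> ?A0 \<and> \<eta> \<in> ?G"
    show "\<forall>j\<in>J. graft (a, \<eta>) j \<in> F j"
    proof
      fix j assume "j \<in> J"
      with h show "graft (a, \<eta>) j \<in> F j"
        by (cases j) (force simp: graft_Cons)+
    qed
  qed
  then show "x \<in> graft -` {\<xi>. \<forall>j\<in>J. \<xi> j \<in> F j} \<longleftrightarrow> x \<in> ?A0 \<times> ?G"
    by (simp add: x)
qed

lemma prod_split_head:
  fixes h :: "'a list \<Rightarrow> 'b::comm_monoid_mult"
  assumes "finite J"
  shows "(\<Prod>k\<in>hd ` (J - {[]}). \<Prod>l\<in>{l. k # l \<in> J}. h (k # l)) = (\<Prod>j\<in>J - {[]}. h j)"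
proof -
  let ?S = "Sigma (hd ` (J - {[]})) (\<lambda>k. {l. k # l \<in> J})"
  have fin: "finite {l. k # l \<in> J}" for k
    using finite_vimageI[OF assms, of "(#) k"] by (simp add: vimage_def)
  have "(\<Prod>k\<in>hd ` (J - {[]}). \<Prod>l\<in>{l. k # l \<in> J}. h (k # l)) = (\<Prod>p\<in>?S. h (fst p # snd p))"
    using assms fin by (subst prod.Sigma) (auto simp: case_prod_beta')
  also have "\<dots> = (\<Prod>j\<in>(\<lambda>p. fst p # snd p) ` ?S. h j)"
    by (subst prod.reindex) (auto simp: inj_on_def)
  also have "(\<lambda>p. fst p # snd p) ` ?S = J - {[]}"
  proof (rule set_eqI)
    fix j :: "'a list"
    show "j \<in> (\<lambda>p. fst p # snd p) ` ?S \<longleftrightarrow> j \<in> J - {[]}"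
      by (cases j) (force simp: image_iff)+
  qed
  finally show ?thesis .
qed

lemma emeasure_PiM_children_cylinder:
  assumes N: "prob_space N" and sp: "space N = UNIV"
    and J: "finite J" and F: "\<And>j. j \<in> J \<Longrightarrow> F j \<in> sets N"
  defines "C \<equiv> {\<eta>. \<forall>k\<in>hd ` (J - {[]}). \<eta> k \<in> {\<zeta>. \<forall>l\<in>{l. k # l \<in> J}. \<zeta> l \<in> F (k # l)}}"
  shows "C \<in> sets (PiM UNIV (\<lambda>_::nat. PiM UNIV (\<lambda>_::nat list. N)))"
    and "emeasure (PiM UNIV (\<lambda>_::nat. PiM UNIV (\<lambda>_::nat list. N))) C = (\<Prod>j\<in>J - {[]}. emeasure N (F j))"
proof -
  interpret N: prob_space N by (rule N)
  let ?P = "PiM UNIV (\<lambda>_::nat list. N)"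
  interpret PP: product_prob_space "\<lambda>_::nat list. N" UNIV by unfold_locales
  have "prob_space ?P" by (rule prob_space_PiM) (rule N)
  interpret QQ: product_prob_space "\<lambda>_::nat. ?P" UNIV by unfold_locales
  define K where "K = hd ` (J - {[]})"
  define Jk where "Jk k = {l. k # l \<in> J}" for k
  define G where "G k = {\<zeta>::nat list \<Rightarrow> 'a. \<forall>l\<in>Jk k. \<zeta> l \<in> F (k # l)}" for k
  have K: "finite K" using J by (simp add: K_def)
  have Jk: "finite (Jk k)" for k
    using finite_vimageI[OF J, of "(#) k"] by (simp add: Jk_def vimage_def)
  have G: "G k = prod_emb UNIV (\<lambda>_. N) (Jk k) (PiE (Jk k) (\<lambda>l. F (k # l)))" for k
    unfolding G_def by (rule prod_emb_UNIV_const[OF sp, symmetric])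
  have G_sets: "G k \<in> sets ?P" for k
    unfolding G using Jk F by (intro sets_PiM_I) (auto simp: Jk_def)
  have C: "C = prod_emb UNIV (\<lambda>_. ?P) K (PiE K G)"
    unfolding C_def K_def G_def Jk_def
    by (rule prod_emb_UNIV_const[OF space_PiM_UNIV_const[OF sp], symmetric])
  show "C \<in> sets (PiM UNIV (\<lambda>_::nat. ?P))"
    unfolding C using K G_sets by (intro sets_PiM_I) auto
  have "emeasure (PiM UNIV (\<lambda>_::nat. ?P)) C = (\<Prod>k\<in>K. emeasure ?P (G k))"
    unfolding C using K G_sets by (intro QQ.emeasure_PiM_emb) auto
  also have "\<dots> = (\<Prod>k\<in>K. \<Prod>l\<in>Jk k. emeasure N (F (k # l)))"
    unfolding G using Jk F by (intro prod.cong refl PP.emeasure_PiM_emb) (auto simp: Jk_def)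
  also have "\<dots> = (\<Prod>j\<in>J - {[]}. emeasure N (F j))"
    unfolding K_def Jk_def by (rule prod_split_head[OF J])
  finally show "emeasure (PiM UNIV (\<lambda>_::nat. ?P)) C = (\<Prod>j\<in>J - {[]}. emeasure N (F j))" .
qed

text \<open>An i.i.d.\ family indexed by words is the root mark together with independent i.i.d.\
  families for the subtrees of the children.\<close>
lemma distr_graft_PiM:
  assumes N: "prob_space N" and sp: "space N = UNIV"
  shows "distr (N \<Otimes>\<^sub>M PiM UNIV (\<lambda>_::nat. PiM UNIV (\<lambda>_::nat list. N))) (PiM UNIV (\<lambda>_::nat list. N)) graft
           = PiM UNIV (\<lambda>_::nat list. N)"
proof -
  interpret N: prob_space N by (rule N)
  let ?P = "PiM UNIV (\<lambda>_::nat list. N)"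
  let ?Q = "PiM UNIV (\<lambda>_::nat. ?P)"
  interpret PP: product_prob_space "\<lambda>_::nat list. N" UNIV by unfold_locales
  have "prob_space ?P" by (rule prob_space_PiM) (rule N)
  then have Q: "prob_space ?Q" by (rule prob_space_PiM)
  show ?thesis
  proof (rule PP.PiM_eq)
    fix J :: "nat list set" and F assume J: "finite J" and F: "\<And>j. j \<in> J \<Longrightarrow> F j \<in> sets N"
    let ?A0 = "if [] \<in> J then F [] else UNIV"
    let ?C = "{\<eta>. \<forall>k\<in>hd ` (J - {[]}). \<eta> k \<in> {\<zeta>. \<forall>l\<in>{l. k # l \<in> J}. \<zeta> l \<in> F (k # l)}}"
    have cyl: "prod_emb UNIV (\<lambda>_. N) J (PiE J F) \<in> sets ?P"
      using J F by (intro sets_PiM_I) auto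
    have "graft -` prod_emb UNIV (\<lambda>_. N) J (PiE J F) \<inter> space (N \<Otimes>\<^sub>M ?Q) = ?A0 \<times> ?C"
      unfolding prod_emb_UNIV_const[OF sp] graft_vimage_cylinder
      by (simp add: space_pair_measure sp space_PiM_UNIV_const)
    then have "emeasure (distr (N \<Otimes>\<^sub>M ?Q) ?P graft) (prod_emb UNIV (\<lambda>_. N) J (PiE J F))
        = emeasure (N \<Otimes>\<^sub>M ?Q) (?A0 \<times> ?C)"
      using emeasure_distr[OF measurable_graft[OF sp] cyl] by simp
    also have "\<dots> = emeasure N ?A0 * emeasure ?Q ?C"
      using F sets.top[of N] emeasure_PiM_children_cylinder(1)[OF N sp J F]
      by (intro sigma_finite_measure.emeasure_pair_measure_Times prob_space_imp_sigma_finite Q)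
         (auto simp: sp)
    also have "emeasure ?Q ?C = (\<Prod>j\<in>J - {[]}. emeasure N (F j))"
      by (rule emeasure_PiM_children_cylinder(2)[OF N sp J F])
    also have "emeasure N ?A0 * \<dots> = (\<Prod>j\<in>J. emeasure N (F j))"
      using J N.emeasure_space_1 by (auto simp: prod.remove sp)
    finally show "emeasure (distr (N \<Otimes>\<^sub>M ?Q) ?P graft) (prod_emb UNIV (\<lambda>_. N) J (PiE J F))
        = (\<Prod>j\<in>J. emeasure N (F j))" .
  qed simp_all
qed

lemma integral_PiM_prod_components:
  fixes F :: "'i \<Rightarrow> 'a \<Rightarrow> real"
  assumes "prob_space P" and K: "finite K" and F: "\<And>k. k \<in> K \<Longrightarrow> integrable P (F k)"
  shows "(\<integral>\<eta>. (\<Prod>k\<in>K. F k (\<eta> k)) \<partial>PiM UNIV (\<lambda>_::'i. P)) = (\<Prod>k\<in>K. integral\<^sup>L P (F k))"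
proof -
  interpret prob_space P by fact
  interpret PP: product_prob_space "\<lambda>_::'i. P" UNIV by unfold_locales
  have [measurable]: "F k \<in> borel_measurable P" if "k \<in> K" for k using F[OF that] by auto
  have "(\<Prod>k\<in>K. integral\<^sup>L P (F k)) = (\<integral>x. (\<Prod>k\<in>K. F k (x k)) \<partial>PiM K (\<lambda>_. P))"
    using PP.product_integral_prod[of K F] K F by simp
  also have "\<dots> = (\<integral>x. (\<Prod>k\<in>K. F k (x k)) \<partial>distr (PiM UNIV (\<lambda>_. P)) (PiM K (\<lambda>_. P)) (\<lambda>x. restrict x K))"
    using PP.distr_PiM_restrict_finite[OF K] by simp
  also have "\<dots> = (\<integral>\<eta>. (\<Prod>k\<in>K. F k (restrict \<eta> K k)) \<partial>PiM UNIV (\<lambda>_::'i. P))"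
  proof (rule integral_distr)
    show "(\<lambda>x. restrict x K) \<in> measurable (PiM UNIV (\<lambda>_. P)) (PiM K (\<lambda>_. P))"
      by (rule measurable_restrict_subset) auto
    show "(\<lambda>x. \<Prod>k\<in>K. F k (x k)) \<in> borel_measurable (PiM K (\<lambda>_. P))"
      by (intro borel_measurable_prod measurable_compose[OF measurable_component_singleton]) auto
  qed
  also have "\<dots> = (\<integral>\<eta>. (\<Prod>k\<in>K. F k (\<eta> k)) \<partial>PiM UNIV (\<lambda>_::'i. P))"
    by (intro arg_cong[where f="integral\<^sup>L _"] ext prod.cong) simp_all
  finally show ?thesis by simp
qed

lemma lborel_integral_reflect_interval:
  fixes g :: "real \<Rightarrow> real"
  shows "(\<integral>s. indicator {0..t} s *\<^sub>R g (t - s) \<partial>lborel) = (\<integral>s. indicator {0..t} s *\<^sub>R g s \<partial>lborel)"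
proof -
  have "(\<integral>s. indicator {0..t} s *\<^sub>R g s \<partial>lborel)
      = \<bar>-1::real\<bar> *\<^sub>R (\<integral>x. indicator {0..t} (t + -1 * x) *\<^sub>R g (t + -1 * x) \<partial>lborel)"
    by (rule lborel_integral_real_affine) simp
  also have "(\<lambda>x. indicator {0..t} (t + -1 * x) *\<^sub>R g (t + -1 * x)) = (\<lambda>s. indicator {0..t} s *\<^sub>R g (t - s))"
    by (auto simp: indicator_def fun_eq_iff)
  finally show ?thesis by simp
qed

lemma sum_mech_eq_average_offspring:
  fixes h :: "'n::finite code list \<Rightarrow> real"
  shows "(\<Sum>Z\<in>mech c. h Z) = real (card (mech c)) / real CARD('n) * (\<Sum>j\<in>UNIV. h (offspring c j))"
proof (cases c)
  case (IdC i)
  then have "mech c = {[DC (\<lambda>_. 0) i]}" by (auto simp: mech_def)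
  then show ?thesis using IdC by simp
next
  case (DC \<alpha> i)
  then have inj: "inj (offspring c)" by (auto intro: injI)
  then have "card (mech c) = CARD('n)" by (simp add: mech_def card_image)
  then show ?thesis using inj by (simp add: mech_def sum.reindex)
qed

section \<open>Conditioning on the mark of the root\<close>

lemma prod_list_map_conv_prod_nth: "(\<Prod>z\<leftarrow>xs. f z) = (\<Prod>k<length xs. f (xs ! k))"
  by (simp add: prod.list_conv_set_nth atLeast0LessThan)

locale coding_tree =
  fixes v :: "'n::finite code \<Rightarrow> real" and \<rho> :: "real \<Rightarrow> real" and M :: "'w measure"
    and X :: "nat list \<Rightarrow> 'w \<Rightarrow> real \<times> 'n" and T K0 :: real and y :: "'n code \<Rightarrow> real \<Rightarrow> real"
  assumes rho_meas [measurable]: "\<rho> \<in> borel_measurable borel"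
    and rho_pos: "\<forall>s\<ge>0. \<rho> s > 0"
    and prob_space_M: "prob_space M"
    and indep: "prob_space.indep_vars M (\<lambda>_. borel \<Otimes>\<^sub>M count_space UNIV) X UNIV"
    and law: "\<forall>lab. distr M (borel \<Otimes>\<^sub>M count_space UNIV) (X lab) =
               density lborel (\<lambda>s. ennreal (if 0 \<le> s then \<rho> s else 0))
                 \<Otimes>\<^sub>M measure_pmf (pmf_of_set UNIV)"
    and bound: "\<forall>c. \<forall>t\<in>{0..T}. (\<integral>\<^sup>+ \<omega>. ennreal \<bar>Hval v \<rho> X t c \<omega>\<bar> \<partial>M) \<le> ennreal K0"
    and y_def: "\<forall>c t. y c t = prob_space.expectation M (Hval v \<rho> X t c)"
    and K0_pos: "K0 > 0"
begin

interpretation M: prob_space M by (rule prob_space_M)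

definition lifetime_density :: "real \<Rightarrow> real" where
  "lifetime_density s = (if 0 \<le> s then \<rho> s else 0)"

definition lifetime_distr :: "real measure" where
  "lifetime_distr = density lborel (\<lambda>s. ennreal (lifetime_density s))"

definition mark_distr :: "(real \<times> 'n) measure" where
  "mark_distr = lifetime_distr \<Otimes>\<^sub>M measure_pmf (pmf_of_set UNIV)"

definition tree_distr :: "(nat list \<Rightarrow> real \<times> 'n) measure" where
  "tree_distr = PiM UNIV (\<lambda>_. mark_distr)"

lemma measurable_X: "X l \<in> measurable M marks"
  using indep unfolding M.indep_vars_def by auto

lemma distr_X: "distr M marks (X l) = mark_distr"
  using law by (simp add: mark_distr_def lifetime_distr_def lifetime_density_def)

lemma prob_space_mark_distr: "prob_space mark_distr"
  using M.prob_space_distr[OF measurable_X] distr_X by simp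

lemma sets_mark_distr: "sets mark_distr = sets marks"
  unfolding mark_distr_def lifetime_distr_def by (intro sets_pair_measure_cong) auto

lemma space_mark_distr: "space mark_distr = UNIV"
  unfolding mark_distr_def lifetime_distr_def by (simp add: space_pair_measure)

lemma sets_tree_distr: "sets tree_distr = sets (PiM UNIV (\<lambda>_::nat list. marks))"
  unfolding tree_distr_def by (intro sets_PiM_cong) (auto simp: sets_mark_distr)

lemma prob_space_tree_distr: "prob_space tree_distr"
  unfolding tree_distr_def by (rule prob_space_PiM) (rule prob_space_mark_distr)

lemma measurable_marks_of: "(\<lambda>\<omega> l. X l \<omega>) \<in> measurable M (PiM UNIV (\<lambda>_::nat list. marks))"
  by (rule measurable_PiM_single') (auto simp: measurable_X space_PiM space_pair_measure)

lemma distr_marks_of: "distr M (PiM UNIV (\<lambda>_::nat list. marks)) (\<lambda>\<omega> l. X l \<omega>) = tree_distr"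
proof -
  have "distr M (PiM UNIV (\<lambda>_. marks)) (\<lambda>\<omega>. \<lambda>l\<in>UNIV. X l \<omega>) = PiM UNIV (\<lambda>l. distr M marks (X l))"
    using M.indep_vars_iff_distr_eq_PiM[where I=UNIV and M'="\<lambda>_. marks" and X=X] measurable_X indep
    by auto
  then show ?thesis by (simp add: distr_X tree_distr_def restrict_UNIV)
qed

lemma borel_measurable_H_tree: "H_tree v \<rho> r c \<in> borel_measurable tree_distr"
  using measurable_Pair2[OF H_tree_measurable[OF rho_meas, of v c], of r]
  by (simp add: measurable_cong_sets[OF sets_tree_distr refl])

lemma y_eq_integral_tree_distr: "y c r = (\<integral>\<xi>. H_tree v \<rho> r c \<xi> \<partial>tree_distr)"
proof -
  have "Hval v \<rho> X r c = (\<lambda>\<omega>. H_tree v \<rho> r c (\<lambda>l. X l \<omega>))"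
    by (rule ext) (rule Hval_eq_H_tree)
  then have "y c r = (\<integral>\<omega>. H_tree v \<rho> r c (\<lambda>l. X l \<omega>) \<partial>M)"
    using y_def by simp
  also have "\<dots> = (\<integral>\<xi>. H_tree v \<rho> r c \<xi> \<partial>tree_distr)"
    unfolding distr_marks_of[symmetric]
    by (rule integral_distr[symmetric, OF measurable_marks_of])
       (use borel_measurable_H_tree in \<open>simp add: measurable_cong_sets[OF sets_tree_distr refl]\<close>)
  finally show ?thesis .
qed

lemma nn_integral_H_tree_le:
  assumes "r \<in> {0..T}"
  shows "(\<integral>\<^sup>+\<xi>. ennreal (norm (H_tree v \<rho> r c \<xi>)) \<partial>tree_distr) \<le> ennreal K0"
proof -
  have "(\<integral>\<^sup>+\<xi>. ennreal (norm (H_tree v \<rho> r c \<xi>)) \<partial>tree_distr)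
      = (\<integral>\<^sup>+\<omega>. ennreal \<bar>Hval v \<rho> X r c \<omega>\<bar> \<partial>M)"
    unfolding distr_marks_of[symmetric] Hval_eq_H_tree
    by (subst nn_integral_distr[OF measurable_marks_of])
       (use borel_measurable_H_tree in \<open>simp_all add: measurable_cong_sets[OF sets_tree_distr refl]\<close>)
  also have "\<dots> \<le> ennreal K0" using bound assms by auto
  finally show ?thesis .
qed

lemma integrable_H_tree:
  assumes "r \<in> {0..T}"
  shows "integrable tree_distr (H_tree v \<rho> r c)"
proof (rule integrableI_bounded[OF borel_measurable_H_tree])
  show "(\<integral>\<^sup>+\<xi>. ennreal (norm (H_tree v \<rho> r c \<xi>)) \<partial>tree_distr) < \<infinity>"
    using nn_integral_H_tree_le[OF assms, of c] by (rule order.strict_trans1) simp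
qed

lemma abs_y_le: 
  assumes "r \<in> {0..T}"
  shows "\<bar>y c r\<bar> \<le> K0"
proof -
  have "ennreal \<bar>y c r\<bar> \<le> (\<integral>\<^sup>+\<xi>. ennreal (norm (H_tree v \<rho> r c \<xi>)) \<partial>tree_distr)"
    using integral_norm_bound_ennreal[OF integrable_H_tree[OF assms]]
    by (simp add: y_eq_integral_tree_distr)
  also have "\<dots> \<le> ennreal K0" by (rule nn_integral_H_tree_le[OF assms])
  finally show ?thesis using K0_pos by (simp add: ennreal_le_iff)
qed

lemma borel_measurable_y [measurable]: "y c \<in> borel_measurable borel"
proof -
  interpret prob_space tree_distr by (rule prob_space_tree_distr)
  have "(\<lambda>(r, \<xi>). H_tree v \<rho> r c \<xi>) \<in> borel_measurable (borel \<Otimes>\<^sub>M tree_distr)"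
    using H_tree_measurable[OF rho_meas, of v c]
    by (simp add: measurable_cong_sets[OF sets_pair_measure_cong[OF refl sets_tree_distr] refl])
  from borel_measurable_lebesgue_integral[OF this] show ?thesis
    by (simp add: y_eq_integral_tree_distr[abs_def])
qed

lemma borel_measurable_lifetime_density [measurable]: "lifetime_density \<in> borel_measurable borel"
  unfolding lifetime_density_def by measurable

lemma lifetime_density_nonneg: "0 \<le> lifetime_density s"
  using rho_pos by (auto simp: lifetime_density_def less_imp_le)

lemma space_lifetime_distr: "space lifetime_distr = UNIV"
  and sets_lifetime_distr: "sets lifetime_distr = sets borel"
  by (simp_all add: lifetime_distr_def)

lemma emeasure_mark_distr_Times:
  "A \<in> sets borel \<Longrightarrow> emeasure mark_distr (A \<times> UNIV) = emeasure lifetime_distr A"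
  unfolding mark_distr_def
  using sigma_finite_measure.emeasure_pair_measure_Times[OF prob_space_imp_sigma_finite[OF prob_space_measure_pmf],
          of A lifetime_distr UNIV]
  by (simp add: sets_lifetime_distr prob_space.emeasure_space_1[OF prob_space_measure_pmf])

lemma prob_space_lifetime_distr: "prob_space lifetime_distr"
proof
  have "emeasure lifetime_distr UNIV = emeasure mark_distr (space mark_distr)"
    using emeasure_mark_distr_Times[of UNIV] by (simp add: space_mark_distr)
  then show "emeasure lifetime_distr (space lifetime_distr) = 1"
    by (simp add: prob_space.emeasure_space_1[OF prob_space_mark_distr] space_lifetime_distr)
qed

lemma AE_mark_distr_nonneg: "AE a in mark_distr. 0 \<le> fst a"
proof (rule AE_I')
  have "emeasure lifetime_distr {..<0} = (\<integral>\<^sup>+ x. ennreal (lifetime_density x) * indicator {..<0} x \<partial>lborel)"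
    unfolding lifetime_distr_def by (rule emeasure_density) auto
  also have "(\<lambda>x. ennreal (lifetime_density x) * indicator {..<0} x) = (\<lambda>x. 0)"
    by (auto simp: lifetime_density_def fun_eq_iff split: split_indicator)
  finally have "emeasure mark_distr ({..<0} \<times> UNIV) = 0"
    by (simp add: emeasure_mark_distr_Times)
  moreover have "{..<0::real} \<times> (UNIV :: 'n set) \<in> sets mark_distr"
    unfolding sets_mark_distr by auto
  ultimately show "{..<0::real} \<times> (UNIV :: 'n set) \<in> null_sets mark_distr" by auto
qed (auto simp: space_mark_distr)

lemma measure_lifetime_distr_greaterThan:
  assumes "0 \<le> t"
  shows "measure lifetime_distr {t<..} = tailF \<rho> t"
proof -
  have "measure lifetime_distr {t<..} = (\<integral>s. indicator {t<..} s \<partial>lifetime_distr)"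
    by (simp add: space_lifetime_distr)
  also have "\<dots> = (\<integral>s. lifetime_density s *\<^sub>R indicator {t<..} s \<partial>lborel)"
    unfolding lifetime_distr_def by (rule integral_density) (auto simp: lifetime_density_nonneg)
  also have "\<dots> = (\<integral>s. indicator {t..} s *\<^sub>R \<rho> s \<partial>lborel)"
  proof (rule integral_cong_AE)
    show "AE s in lborel. lifetime_density s *\<^sub>R indicator {t<..} s = indicator {t..} s *\<^sub>R \<rho> s"
      using AE_lborel_singleton[of t]
      by eventually_elim (use assms in \<open>auto simp: lifetime_density_def indicator_def\<close>)
  qed auto
  also have "\<dots> = tailF \<rho> t" by (simp add: tailF_def set_lebesgue_integral_def)
  finally show ?thesis .
qed

lemma tailF_pos:
  assumes "0 \<le> t"
  shows "tailF \<rho> t > 0"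
proof -
  interpret prob_space lifetime_distr by (rule prob_space_lifetime_distr)
  have em: "emeasure lifetime_distr {t<..} = (\<integral>\<^sup>+ x. ennreal (lifetime_density x) * indicator {t<..} x \<partial>lborel)"
    unfolding lifetime_distr_def by (rule emeasure_density) auto
  have "emeasure lifetime_distr {t<..} \<noteq> 0"
  proof
    assume "emeasure lifetime_distr {t<..} = 0"
    then have "AE x in lborel. ennreal (lifetime_density x) * indicator {t<..} x = 0"
      unfolding em by (subst (asm) nn_integral_0_iff_AE) auto
    then have "AE x in lborel. x \<notin> {t<..<t+1}"
      by eventually_elim (use assms rho_pos in \<open>auto simp: lifetime_density_def indicator_def split: if_splits\<close>)
    then have "emeasure lborel {t<..<t+1} = 0"
      by (subst (asm) AE_iff_measurable[of "{t<..<t+1}"]) auto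
    then show False by simp
  qed
  then have "measure lifetime_distr {t<..} \<noteq> 0"
    by (simp add: emeasure_eq_measure)
  then show ?thesis
    using measure_lifetime_distr_greaterThan[OF assms] by (metis measure_nonneg order_le_less)
qed

definition offspring_prod :: "'n code \<Rightarrow> 'n \<Rightarrow> real \<Rightarrow> real" where
  "offspring_prod c j r = (\<Prod>z\<leftarrow>offspring c j. y z r)"

text \<open>The conditional expectation of the functional given the root mark \<open>a = (\<tau>, j)\<close>.\<close>
definition root_conditional :: "'n code \<Rightarrow> real \<Rightarrow> real \<times> 'n \<Rightarrow> real" where
  "root_conditional c t a = (if t < fst a then v c / tailF \<rho> t
     else real (card (mech c)) / \<rho> (fst a) * offspring_prod c (snd a) (t - fst a))"

lemma borel_measurable_offspring_prod [measurable]: "offspring_prod c j \<in> borel_measurable borel"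
  unfolding offspring_prod_def prod_list_map_conv_prod_nth by measurable

lemma borel_measurable_root_conditional: "root_conditional c t \<in> borel_measurable mark_distr"
proof -
  have [measurable]: "tailF \<rho> \<in> borel_measurable borel"
    by (rule borel_measurable_tailF) measurable
  have "(\<lambda>a. if t < fst a then v c / tailF \<rho> t
      else real (card (mech c)) / \<rho> (fst a) * offspring_prod c j (t - fst a)) \<in> borel_measurable marks" for j
    by measurable
  moreover have "snd \<in> measurable marks (count_space (UNIV::'n set))"
    by measurable
  ultimately have "(\<lambda>a. (\<lambda>j a. if t < fst a then v c / tailF \<rho> t
      else real (card (mech c)) / \<rho> (fst a) * offspring_prod c j (t - fst a)) (snd a) a) \<in> borel_measurable marks"
    by (rule measurable_compose_countable') auto
  then show ?thesis
    by (simp add: root_conditional_def[abs_def] measurable_cong_sets[OF sets_mark_distr refl])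
qed

text \<open>Given the root mark, the subtrees of the children are independent copies of the tree.\<close>
lemma integral_graft_eq_root_conditional:
  assumes t: "t \<in> {0..T}" and a: "0 \<le> fst a"
  shows "(\<integral>\<eta>. H_tree v \<rho> t c (graft (a, \<eta>)) \<partial>PiM UNIV (\<lambda>_::nat. tree_distr)) = root_conditional c t a"
proof -
  interpret Q: prob_space "PiM UNIV (\<lambda>_::nat. tree_distr)"
    by (intro prob_space_PiM prob_space_tree_distr)
  let ?Z = "offspring c (snd a)"
  have unfold: "H_tree v \<rho> t c (graft (a, \<eta>)) = (if t < fst a then v c / tailF \<rho> t
      else real (card (mech c)) / \<rho> (fst a) *
        (\<Prod>k<length ?Z. H_tree v \<rho> (t - fst a) (?Z ! k) (\<eta> k)))" for \<eta>
    by (subst H_tree_unfold) simp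
  show ?thesis
  proof (cases "t < fst a")
    case True
    then show ?thesis by (simp add: unfold root_conditional_def Q.prob_space)
  next
    case False
    have "(\<integral>\<eta>. (\<Prod>k<length ?Z. H_tree v \<rho> (t - fst a) (?Z ! k) (\<eta> k)) \<partial>PiM UNIV (\<lambda>_. tree_distr))
        = (\<Prod>k<length ?Z. \<integral>\<xi>. H_tree v \<rho> (t - fst a) (?Z ! k) \<xi> \<partial>tree_distr)"
      using t a False
      by (intro integral_PiM_prod_components prob_space_tree_distr integrable_H_tree) auto
    also have "\<dots> = offspring_prod c (snd a) (t - fst a)"
      by (simp add: offspring_prod_def prod_list_map_conv_prod_nth y_eq_integral_tree_distr)
    finally show ?thesis
      using False by (simp add: unfold root_conditional_def)
  qed
qed

lemma y_eq_integral_root_conditional: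
  assumes t: "t \<in> {0..T}"
  shows "integrable mark_distr (root_conditional c t)"
    and "y c t = (\<integral>a. root_conditional c t a \<partial>mark_distr)"
proof -
  let ?Q = "PiM UNIV (\<lambda>_::nat. tree_distr)"
  interpret Q: prob_space ?Q by (intro prob_space_PiM prob_space_tree_distr)
  interpret mark: prob_space mark_distr by (rule prob_space_mark_distr)
  interpret pair_sigma_finite mark_distr ?Q by unfold_locales
  have graft: "graft \<in> measurable (mark_distr \<Otimes>\<^sub>M ?Q) tree_distr"
    using measurable_graft[OF space_mark_distr] by (simp add: tree_distr_def)
  have distr_graft: "distr (mark_distr \<Otimes>\<^sub>M ?Q) tree_distr graft = tree_distr"
    using distr_graft_PiM[OF prob_space_mark_distr space_mark_distr] by (simp add: tree_distr_def)
  have int: "integrable (mark_distr \<Otimes>\<^sub>M ?Q) (\<lambda>x. H_tree v \<rho> t c (graft x))"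
    using integrable_H_tree[OF t, of c]
    unfolding integrable_distr_eq[OF graft borel_measurable_H_tree, symmetric] distr_graft .
  have inner_int: "integrable mark_distr (\<lambda>a. \<integral>\<eta>. H_tree v \<rho> t c (graft (a, \<eta>)) \<partial>?Q)"
    by (rule integrable_fst'[OF int])
  have ae: "AE a in mark_distr. (\<integral>\<eta>. H_tree v \<rho> t c (graft (a, \<eta>)) \<partial>?Q) = root_conditional c t a"
    using AE_mark_distr_nonneg by eventually_elim (rule integral_graft_eq_root_conditional[OF t])
  show "integrable mark_distr (root_conditional c t)"
    using integrable_cong_AE[OF borel_measurable_integrable[OF inner_int]
                                borel_measurable_root_conditional ae] inner_int
    by simp
  have "y c t = (\<integral>x. H_tree v \<rho> t c (graft x) \<partial>(mark_distr \<Otimes>\<^sub>M ?Q))"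
    unfolding y_eq_integral_tree_distr
    by (subst (1) distr_graft[symmetric]) (rule integral_distr[OF graft borel_measurable_H_tree])
  also have "\<dots> = (\<integral>a. (\<integral>\<eta>. H_tree v \<rho> t c (graft (a, \<eta>)) \<partial>?Q) \<partial>mark_distr)"
    by (rule integral_fst'[OF int, symmetric])
  also have "\<dots> = (\<integral>a. root_conditional c t a \<partial>mark_distr)"
    by (rule integral_cong_AE[OF borel_measurable_integrable[OF inner_int]
                                 borel_measurable_root_conditional ae])
  finally show "y c t = (\<integral>a. root_conditional c t a \<partial>mark_distr)" .
qed

lemma abs_offspring_prod_le:
  assumes "r \<in> {0..T}"
  shows "\<bar>offspring_prod c j r\<bar> \<le> K0 ^ length (offspring c j)"
proof -
  have "\<bar>offspring_prod c j r\<bar> = (\<Prod>k<length (offspring c j). \<bar>y (offspring c j ! k) r\<bar>)"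
    by (simp add: offspring_prod_def prod_list_map_conv_prod_nth abs_prod)
  also have "\<dots> \<le> (\<Prod>k<length (offspring c j). K0)"
    by (rule prod_mono) (use abs_y_le[OF assms] in auto)
  finally show ?thesis by simp
qed

lemma integrable_offspring_prod:
  assumes "t \<in> {0..T}"
  shows "integrable lborel (\<lambda>s. indicator {0..t} s *\<^sub>R offspring_prod c j s)"
    and "integrable lborel (\<lambda>s. indicator {0..t} s *\<^sub>R offspring_prod c j (t - s))"
  by (rule integrableI_bounded_set_indicator[where B="K0 ^ length (offspring c j)"];
      use assms abs_offspring_prod_le in auto)+

lemma y_eq_lifetime_integral:
  assumes t: "t \<in> {0..T}"
  shows "y c t = (\<integral>s. lifetime_density s *
                    ((\<Sum>j\<in>UNIV. root_conditional c t (s, j)) / real CARD('n)) \<partial>lborel)"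
proof -
  interpret lifetime: prob_space lifetime_distr by (rule prob_space_lifetime_distr)
  interpret choice: prob_space "measure_pmf (pmf_of_set (UNIV :: 'n set))"
    by (rule prob_space_measure_pmf)
  interpret pair_sigma_finite lifetime_distr "measure_pmf (pmf_of_set (UNIV :: 'n set))"
    by unfold_locales
  define G where "G s = (\<Sum>j\<in>UNIV. root_conditional c t (s, j)) / real CARD('n)" for s
  have int: "integrable (lifetime_distr \<Otimes>\<^sub>M measure_pmf (pmf_of_set UNIV)) (root_conditional c t)"
    using y_eq_integral_root_conditional(1)[OF t] by (simp add: mark_distr_def)
  have choice: "(\<integral>j. root_conditional c t (s, j) \<partial>measure_pmf (pmf_of_set UNIV)) = G s" for s
    by (simp add: integral_pmf_of_set G_def)
  have "integrable lifetime_distr G"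
    using integrable_fst'[OF int] by (simp add: choice)
  from borel_measurable_integrable[OF this] have G_meas: "G \<in> borel_measurable borel"
    by (simp add: measurable_cong_sets[OF sets_lifetime_distr refl])
  have "y c t = (\<integral>s. G s \<partial>lifetime_distr)"
    using y_eq_integral_root_conditional(2)[OF t] integral_fst'[OF int]
    by (simp add: mark_distr_def choice)
  also have "\<dots> = (\<integral>s. lifetime_density s *\<^sub>R G s \<partial>lborel)"
    unfolding lifetime_distr_def
    by (rule integral_density) (use G_meas lifetime_density_nonneg in auto)
  finally show ?thesis by (simp add: G_def)
qed

text \<open>Leaves (\<open>s > t\<close>) contribute the initial value, branchings (\<open>s \<le> t\<close>) the offspring
  products: the factor \<open>1 / \<rho> s\<close> of the functional cancels the density.\<close>
lemma lifetime_density_mult_root_average: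
  assumes "0 \<le> t"
  shows "lifetime_density s * ((\<Sum>j\<in>UNIV. root_conditional c t (s, j)) / real CARD('n))
       = indicator {t<..} s * lifetime_density s * (v c / tailF \<rho> t)
         + real (card (mech c)) / real CARD('n) *
             (\<Sum>j\<in>UNIV. indicator {0..t} s * offspring_prod c j (t - s))"
proof (cases "t < s")
  case False
  show ?thesis
  proof (cases "0 \<le> s")
    case True
    then have "\<rho> s > 0" using rho_pos by auto
    then show ?thesis
      using False True
      by (simp add: root_conditional_def lifetime_density_def indicator_def sum_distrib_left
                    sum_divide_distrib)
  qed (use False in \<open>simp add: lifetime_density_def indicator_def\<close>)
qed (use assms in \<open>simp add: root_conditional_def indicator_def\<close>)

lemma integrable_lifetime_density: "integrable lborel lifetime_density"
proof -
  interpret prob_space lifetime_distr by (rule prob_space_lifetime_distr)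
  have "integrable lifetime_distr (\<lambda>_. 1::real)" by simp
  then show ?thesis
    unfolding lifetime_distr_def by (subst (asm) integrable_density) (auto simp: lifetime_density_nonneg)
qed

lemma integral_leaf_weight:
  assumes "0 \<le> t"
  shows "(\<integral>s. indicator {t<..} s * lifetime_density s * (v c / tailF \<rho> t) \<partial>lborel) = v c"
proof -
  have "(\<integral>s. lifetime_density s *\<^sub>R (indicator {t<..} s :: real) \<partial>lborel)
      = (\<integral>s. indicator {t<..} s \<partial>lifetime_distr)"
    unfolding lifetime_distr_def by (subst integral_density) (auto simp: lifetime_density_nonneg)
  also have "\<dots> = tailF \<rho> t"
    using measure_lifetime_distr_greaterThan[OF assms] by (simp add: space_lifetime_distr)
  finally show ?thesis
    using tailF_pos[OF assms] by (simp add: mult.commute)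
qed

lemma y_eq_offspring_integrals:
  assumes t: "t \<in> {0..T}"
  shows "y c t = v c + real (card (mech c)) / real CARD('n) *
                   (\<Sum>j\<in>UNIV. \<integral>s. indicator {0..t} s * offspring_prod c j s \<partial>lborel)"
proof -
  have t0: "0 \<le> t" using t by simp
  have "integrable lborel (\<lambda>s. indicator {t<..} s *\<^sub>R lifetime_density s)"
    by (rule integrable_mult_indicator) (auto intro: integrable_lifetime_density)
  from integrable_mult_left[OF this, of "v c / tailF \<rho> t"]
  have int_leaf: "integrable lborel (\<lambda>s. indicator {t<..} s * lifetime_density s * (v c / tailF \<rho> t))"
    by simp
  have int_branch: "integrable lborel (\<lambda>s. indicator {0..t} s * offspring_prod c j (t - s))" for j
    using integrable_offspring_prod(2)[OF t] by simp
  have "y c t = (\<integral>s. indicator {t<..} s * lifetime_density s * (v c / tailF \<rho> t)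
        + real (card (mech c)) / real CARD('n) *
            (\<Sum>j\<in>UNIV. indicator {0..t} s * offspring_prod c j (t - s)) \<partial>lborel)"
    unfolding y_eq_lifetime_integral[OF t] lifetime_density_mult_root_average[OF t0] ..
  also have "\<dots> = (\<integral>s. indicator {t<..} s * lifetime_density s * (v c / tailF \<rho> t) \<partial>lborel)
      + (\<integral>s. real (card (mech c)) / real CARD('n) *
            (\<Sum>j\<in>UNIV. indicator {0..t} s * offspring_prod c j (t - s)) \<partial>lborel)"
    by (intro Bochner_Integration.integral_add int_leaf integrable_mult_right
              Bochner_Integration.integrable_sum int_branch)
  also have "(\<integral>s. indicator {t<..} s * lifetime_density s * (v c / tailF \<rho> t) \<partial>lborel) = v c"
    by (rule integral_leaf_weight[OF t0])
  also have "(\<integral>s. real (card (mech c)) / real CARD('n) *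
            (\<Sum>j\<in>UNIV. indicator {0..t} s * offspring_prod c j (t - s)) \<partial>lborel)
      = real (card (mech c)) / real CARD('n) *
          (\<Sum>j\<in>UNIV. \<integral>s. indicator {0..t} s * offspring_prod c j (t - s) \<partial>lborel)"
    by (subst integral_mult_right_zero, subst Bochner_Integration.integral_sum) (use int_branch in auto)
  also have "(\<Sum>j\<in>UNIV. \<integral>s. indicator {0..t} s * offspring_prod c j (t - s) \<partial>lborel)
      = (\<Sum>j\<in>UNIV. \<integral>s. indicator {0..t} s * offspring_prod c j s \<partial>lborel)"
    using lborel_integral_reflect_interval[of t "offspring_prod c _"] by simp
  finally show ?thesis .
qed

lemma y_integral_equation:
  assumes t: "t \<in> {0..T}"
  shows "(\<forall>Z\<in>mech c. (\<lambda>s. \<Prod>z\<leftarrow>Z. y z s) integrable_on {0..t}) \<and>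
         y c t = v c + (\<Sum>Z\<in>mech c. integral {0..t} (\<lambda>s. \<Prod>z\<leftarrow>Z. y z s))"
proof -
  have set_int: "set_integrable lborel {0..t} (offspring_prod c j)" for j
    unfolding set_integrable_def by (rule integrable_offspring_prod(1)[OF t])
  have "(\<integral>s. indicator {0..t} s * offspring_prod c j s \<partial>lborel)
      = integral {0..t} (\<lambda>s. \<Prod>z\<leftarrow>offspring c j. y z s)" for j
    using set_borel_integral_eq_integral(2)[OF set_int[of j]]
    by (simp add: set_lebesgue_integral_def offspring_prod_def[abs_def])
  moreover have "\<forall>Z\<in>mech c. (\<lambda>s. \<Prod>z\<leftarrow>Z. y z s) integrable_on {0..t}"
    using set_borel_integral_eq_integral(1)[OF set_int] by (auto simp: mech_def offspring_prod_def[abs_def])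
  ultimately show ?thesis
    using y_eq_offspring_integrals[OF t, of c] by (simp add: sum_mech_eq_average_offspring)
qed

end

theorem mainTheorem3:
  fixes f :: "real^'n::finite \<Rightarrow> real^'n"
    and y0 :: "real^'n"
    and \<rho> :: "real \<Rightarrow> real"
    and M :: "'w measure"
    and X :: "nat list \<Rightarrow> 'w \<Rightarrow> real \<times> 'n"
    and T K0 :: real
    and y :: "'n code \<Rightarrow> real \<Rightarrow> real"
  assumes smooth: "\<forall>i. smooth_fun (\<lambda>x. f x $ i)"
    and lipschitz: "\<forall>i. \<exists>L. L-lipschitz_on UNIV (\<lambda>x. f x $ i)"
    and rho_meas: "\<rho> \<in> borel_measurable borel"
    and rho_pos: "\<forall>s\<ge>0. \<rho> s > 0"
    and P: "prob_space M"
    and indep: "prob_space.indep_vars M (\<lambda>_. borel \<Otimes>\<^sub>M count_space UNIV) X UNIV"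
    and law: "\<forall>lab. distr M (borel \<Otimes>\<^sub>M count_space UNIV) (X lab) =
               density lborel (\<lambda>s. ennreal (if 0 \<le> s then \<rho> s else 0))
                 \<Otimes>\<^sub>M measure_pmf (pmf_of_set UNIV)"
    and T_pos: "T > 0"
    and K0_pos: "K0 > 0"
    and bound: "\<forall>c. \<forall>t\<in>{0..T}.
                 (\<integral>\<^sup>+ \<omega>. ennreal \<bar>Hval (code_val f y0) \<rho> X t c \<omega>\<bar> \<partial>M) \<le> ennreal K0"
    and y_def: "\<forall>c t. y c t = prob_space.expectation M (Hval (code_val f y0) \<rho> X t c)"
  shows "\<forall>c. \<forall>t\<in>{0..T}.
           (\<forall>Z\<in>mech c. (\<lambda>s. \<Prod>z\<leftarrow>Z. y z s) integrable_on {0..t}) \<and>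
           y c t = code_val f y0 c + (\<Sum>Z\<in>mech c. integral {0..t} (\<lambda>s. \<Prod>z\<leftarrow>Z. y z s))"
proof -
  interpret coding_tree "code_val f y0" \<rho> M X T K0 y
    by (rule coding_tree.intro[OF rho_meas rho_pos P indep law bound y_def K0_pos])
  show ?thesis using y_integral_equation by blast
qed

end
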